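(* The probability that $\mathcal{X}$ is not $\delta$-sparse is at most \[ n^{16d\sqrt{k}+12}\cdot\left(\frac{n^4\delta}{\sigma}\right)^d. \]
   Context: Setting: positive integers $n,k,d$ with $k\le n$, $d\le n$; $\sigma>0$; adversarial $\mu_1,\ldots,\mu_n\in[0,1]^d$; $\mathcal{X}=\{x_1,\ldots,x_n\}$ with $x_i=\mu_i+g_i$, where the $g_i$ are independent $d$-dimensional Gaussian vectors with mean $0$ and independent coordinates of standard deviation $\sigma$. ($\sqrt{k}$ is treated as an integer.) A key-value is an expression $K=\frac{s}{t}\cdot\mathrm{cm}(S)$ with $s,t\in\mathbb{N}$, $s\le n^2$, $t<n$, and $S\subseteq\mathcal{X}$ a set of at most $4d\sqrt{k}$ points, where $\mathrm{cm}(S)$ is the center of mass of $S$; it is thus a formal linear combination of the data points. For key-values (or sums of key-values) $K,K'$, write $K\equiv K'$ iff they have identical coefficients for every data point. $\mathcal{X}$ is $\delta$-sparse if for all key-values $K_1,K_2,K_3,K_4$ with $\|K_1+K_2-K_3-K_4\|\le\delta$ we have $K_1+K_2\equiv K_3+K_4$. *)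

theory Defs
  imports "HOL-Probability.Probability"
begin

text \<open>Data points are indexed by i < n. A key-value (s/t) cm(S) is represented by its
  coefficient vector over the data points: coefficient s/(t |S|) on each i in S, 0 elsewhere.\<close>

definition key_coeffs :: "nat \<Rightarrow> nat \<Rightarrow> nat set \<Rightarrow> nat \<Rightarrow> real" where
  "key_coeffs s t S = (\<lambda>i. if i \<in> S then real s / (real t * real (card S)) else 0)"

definition is_key_value :: "nat \<Rightarrow> nat \<Rightarrow> nat \<Rightarrow> (nat \<Rightarrow> real) \<Rightarrow> bool" where
  "is_key_value n d k c \<longleftrightarrow>
     (\<exists>s t S. 1 \<le> s \<and> s \<le> n^2 \<and> 1 \<le> t \<and> t < n \<and> S \<subseteq> {..<n} \<and> S \<noteq> {} \<and>
        real (card S) \<le> 4 * real d * sqrt (real k) \<and> c = key_coeffs s t S)"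

definition lincomb :: "nat \<Rightarrow> (nat \<Rightarrow> 'a::real_vector) \<Rightarrow> (nat \<Rightarrow> real) \<Rightarrow> 'a" where
  "lincomb n x c = (\<Sum>i<n. c i *\<^sub>R x i)"

definition delta_sparse :: "nat \<Rightarrow> nat \<Rightarrow> nat \<Rightarrow> real \<Rightarrow> (nat \<Rightarrow> 'a::real_normed_vector) \<Rightarrow> bool" where
  "delta_sparse n d k \<delta> x \<longleftrightarrow>
     (\<forall>c1 c2 c3 c4. is_key_value n d k c1 \<and> is_key_value n d k c2 \<and>
        is_key_value n d k c3 \<and> is_key_value n d k c4 \<and>
        norm (lincomb n x c1 + lincomb n x c2 - lincomb n x c3 - lincomb n x c4) \<le> \<delta>
        \<longrightarrow> (\<lambda>i. c1 i + c2 i) = (\<lambda>i. c3 i + c4 i))"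

end

theory Submission
  imports Defs
begin

text \<open>
  Fix four key-values with \<open>K\<^sub>1 + K\<^sub>2 \<not>\<equiv> K\<^sub>3 + K\<^sub>4\<close> and let \<open>w\<close> be the coefficient vector of
  \<open>K\<^sub>1 + K\<^sub>2 - K\<^sub>3 - K\<^sub>4\<close>, nonzero at some data point \<open>i\<^sub>0\<close>. Each coefficient of a
  key-value \<open>(s/t) cm(S)\<close> is a fraction with denominator \<open>q = t |S|\<close>, so
  \<open>|w i\<^sub>0| \<ge> 1/(q\<^sub>1 q\<^sub>2 q\<^sub>3 q\<^sub>4)\<close>. Conditioned on all noise vectors except \<open>g\<^sub>i\<^sub>0\<close>, every
  coordinate of \<open>\<Sum> w i x\<^sub>i\<close> is an affine function of the corresponding coordinate of
  \<open>g\<^sub>i\<^sub>0\<close> with slope \<open>w i\<^sub>0\<close>; as the Gaussian density is at most \<open>1/(2\<sigma>)\<close>, the norm is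
  at most \<open>\<delta>\<close> with probability at most \<open>(\<delta> q\<^sub>1 q\<^sub>2 q\<^sub>3 q\<^sub>4 / \<sigma>)\<^sup>d\<close>. A union bound over all
  quadruples gives \<open>(\<delta>/\<sigma>)\<^sup>d (\<Sum>\<^sub>K q\<^sub>K\<^sup>d)\<^sup>4\<close>, and \<open>\<Sum>\<^sub>K q\<^sub>K\<^sup>d \<le> n\<^sup>m\<^sup>+\<^sup>d\<^sup>+\<^sup>3\<close> with
  \<open>m = \<lfloor>4d\<surd>k\<rfloor>\<close>, the bound on \<open>|S|\<close>.
\<close>

section \<open>Anti-concentration of Gaussian linear combinations\<close>

abbreviation gaussian_vector :: "real \<Rightarrow> ('d \<Rightarrow> real) measure" where
  "gaussian_vector \<sigma> \<equiv> PiM UNIV (\<lambda>_. density lborel (normal_density 0 \<sigma>))"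

lemma measurable_component_component [measurable (raw)]:
  "i \<in> I \<Longrightarrow> (\<lambda>g. g i j) \<in> measurable (PiM I (\<lambda>_. PiM UNIV N)) (N j)"
  by (rule measurable_compose[OF measurable_component_singleton[of i I] measurable_component_singleton])
    auto

lemma prob_space_gaussian_vector: "\<sigma> > 0 \<Longrightarrow> prob_space (gaussian_vector \<sigma>)"
  by (intro prob_space_PiM prob_space_normal_density)

lemma normal_density_le:
  assumes "\<sigma> > 0"
  shows "normal_density \<mu> \<sigma> x \<le> 1 / (2 * \<sigma>)"
proof -
  have "sqrt (2 * pi * \<sigma>\<^sup>2) = sqrt (2 * pi) * \<sigma>"
    using assms by (simp add: real_sqrt_mult)
  moreover have "2 \<le> sqrt (2 * pi)"
    using pi_gt3 by (simp add: real_le_rsqrt)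
  ultimately have "2 * \<sigma> \<le> sqrt (2 * pi * \<sigma>\<^sup>2)"
    using assms by simp
  have "normal_density \<mu> \<sigma> x \<le> 1 / sqrt (2 * pi * \<sigma>\<^sup>2)"
    unfolding normal_density_def by (rule mult_left_le) auto
  also have "\<dots> \<le> 1 / (2 * \<sigma>)"
    using assms \<open>2 * \<sigma> \<le> _\<close> by (intro divide_left_mono) auto
  finally show ?thesis .
qed

lemma emeasure_normal_slab_le:
  fixes b c r :: real
  assumes "\<sigma> > 0" "c \<noteq> 0" "r \<ge> 0"
  shows "emeasure (density lborel (normal_density \<mu> \<sigma>)) {y. \<bar>b + c * y\<bar> \<le> r}
    \<le> ennreal (r / (\<bar>c\<bar> * \<sigma>))"
proof -
  define a where "a = - b / c"
  have slab_subset: "{y. \<bar>b + c * y\<bar> \<le> r} \<subseteq> {a - r / \<bar>c\<bar> .. a + r / \<bar>c\<bar>}"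
  proof
    fix y assume "y \<in> {y. \<bar>b + c * y\<bar> \<le> r}"
    then have "\<bar>c\<bar> * \<bar>y - a\<bar> \<le> r"
      using assms(2) by (simp add: a_def abs_mult[symmetric] algebra_simps)
    then have "\<bar>y - a\<bar> \<le> r / \<bar>c\<bar>"
      using assms(2) by (simp add: pos_le_divide_eq mult.commute)
    then show "y \<in> {a - r / \<bar>c\<bar> .. a + r / \<bar>c\<bar>}"
      by (simp add: abs_le_iff)
  qed
  have "emeasure (density lborel (normal_density \<mu> \<sigma>)) {y. \<bar>b + c * y\<bar> \<le> r}
      = (\<integral>\<^sup>+ y. ennreal (normal_density \<mu> \<sigma> y) * indicator {y. \<bar>b + c * y\<bar> \<le> r} y \<partial>lborel)"
    by (intro emeasure_density) measurable
  also have "\<dots> \<le> (\<integral>\<^sup>+ y. ennreal (1 / (2 * \<sigma>)) * indicator {a - r / \<bar>c\<bar> .. a + r / \<bar>c\<bar>} y \<partial>lborel)"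
    using slab_subset normal_density_le[OF assms(1)]
    by (intro nn_integral_mono) (auto simp: indicator_def ennreal_leI)
  also have "\<dots> = ennreal (1 / (2 * \<sigma>)) * ennreal (2 * r / \<bar>c\<bar>)"
    using assms by (simp add: nn_integral_cmult_indicator)
  also have "\<dots> = ennreal (r / (\<bar>c\<bar> * \<sigma>))"
    using assms by (simp add: ennreal_mult[symmetric])
  finally show ?thesis .
qed

lemma sets_gaussian_vector_box:
  fixes b :: "'d::finite \<Rightarrow> real"
  shows "{y. \<forall>j. \<bar>b j + c * y j\<bar> \<le> r} \<in> sets (gaussian_vector \<sigma>)"
proof -
  have "{y. \<forall>j. \<bar>b j + c * y j\<bar> \<le> r}
      = {y \<in> space (gaussian_vector \<sigma>). \<forall>j. \<bar>b j + c * y j\<bar> \<le> r}"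
    by (simp add: space_PiM)
  also have "\<dots> \<in> sets (gaussian_vector \<sigma>)"
    by measurable
  finally show ?thesis .
qed

lemma emeasure_gaussian_vector_box_le:
  fixes b :: "'d::finite \<Rightarrow> real"
  assumes "\<sigma> > 0" "c \<noteq> 0" "r \<ge> 0"
  shows "emeasure (gaussian_vector \<sigma>) {y. \<forall>j. \<bar>b j + c * y j\<bar> \<le> r}
    \<le> ennreal ((r / (\<bar>c\<bar> * \<sigma>)) ^ CARD('d))"
proof -
  let ?N = "density lborel (normal_density 0 \<sigma>)"
  interpret product_prob_space "\<lambda>_::'d. ?N" UNIV
    using assms(1) by (intro product_prob_spaceI prob_space_normal_density)
  have "{y. \<forall>j. \<bar>b j + c * y j\<bar> \<le> r} = PiE UNIV (\<lambda>j. {y. \<bar>b j + c * y\<bar> \<le> r})"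
    by (auto simp: PiE_UNIV_domain)
  then have "emeasure (gaussian_vector \<sigma>) {y. \<forall>j. \<bar>b j + c * y j\<bar> \<le> r}
      = (\<Prod>j\<in>UNIV. emeasure ?N {y. \<bar>b j + c * y\<bar> \<le> r})"
    by (simp only:) (rule emeasure_PiM; simp)
  also have "\<dots> \<le> (\<Prod>j\<in>(UNIV::'d set). ennreal (r / (\<bar>c\<bar> * \<sigma>)))"
    by (rule prod_mono_ennreal) (rule emeasure_normal_slab_le[OF assms])
  also have "\<dots> = ennreal ((r / (\<bar>c\<bar> * \<sigma>)) ^ CARD('d))"
    using assms by (simp add: ennreal_power)
  finally show ?thesis .
qed

lemma emeasure_gaussian_combination_box_le:
  fixes a :: "'d::finite \<Rightarrow> real" and w :: "'i \<Rightarrow> real"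
  assumes "\<sigma> > 0" "\<delta> \<ge> 0" "finite I" "i0 \<in> I" "w i0 \<noteq> 0"
  defines "M \<equiv> PiM I (\<lambda>_. gaussian_vector \<sigma>)"
  shows "emeasure M {g \<in> space M. \<forall>j. \<bar>a j + (\<Sum>i\<in>I. w i * g i j)\<bar> \<le> \<delta>}
    \<le> ennreal ((\<delta> / (\<bar>w i0\<bar> * \<sigma>)) ^ CARD('d))"
proof -
  let ?P = "gaussian_vector \<sigma> :: ('d \<Rightarrow> real) measure"
  let ?B = "{g \<in> space M. \<forall>j. \<bar>a j + (\<Sum>i\<in>I. w i * g i j)\<bar> \<le> \<delta>}"
  let ?bound = "ennreal ((\<delta> / (\<bar>w i0\<bar> * \<sigma>)) ^ CARD('d))"
  define J where "J = I - {i0}"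
  have I_eq: "I = insert i0 J" and "finite J" "i0 \<notin> J"
    using assms(3,4) by (auto simp: J_def)
  interpret product_prob_space "\<lambda>_::'i. ?P" UNIV
    using assms(1) by (intro product_prob_spaceI prob_space_gaussian_vector)
  interpret PJ: prob_space "PiM J (\<lambda>_. ?P)"
    by (intro prob_space_PiM prob_space_gaussian_vector assms(1))
  have B_sets: "?B \<in> sets (PiM (insert i0 J) (\<lambda>_. ?P))"
    unfolding M_def I_eq[symmetric] using assms(3) by measurable
  have "emeasure M ?B = (\<integral>\<^sup>+ g. indicator ?B g \<partial>PiM (insert i0 J) (\<lambda>_. ?P))"
    using B_sets by (simp add: M_def I_eq[symmetric])
  also have "\<dots> = (\<integral>\<^sup>+ h. (\<integral>\<^sup>+ y. indicator ?B (h(i0 := y)) \<partial>?P) \<partial>PiM J (\<lambda>_. ?P))"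
    using \<open>finite J\<close> \<open>i0 \<notin> J\<close> B_sets by (intro product_nn_integral_insert borel_measurable_indicator)
  also have "\<dots> \<le> (\<integral>\<^sup>+ h. ?bound \<partial>PiM J (\<lambda>_. ?P))"
  proof (rule nn_integral_mono)
    fix h :: "'i \<Rightarrow> 'd \<Rightarrow> real"
    define b where "b j = a j + (\<Sum>i\<in>J. w i * h i j)" for j
    let ?C = "{y. \<forall>j. \<bar>b j + w i0 * y j\<bar> \<le> \<delta>}"
    have "(\<Sum>i\<in>I. w i * (h(i0 := y)) i j) = w i0 * y j + (\<Sum>i\<in>J. w i * h i j)" for y j
      using \<open>finite J\<close> \<open>i0 \<notin> J\<close> unfolding I_eq
      by (auto simp: sum.insert intro!: sum.cong)
    then have "indicator ?B (h(i0 := y)) \<le> (indicator ?C y :: ennreal)" for y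
      by (auto simp: indicator_def b_def algebra_simps)
    moreover have "?C \<in> sets ?P"
      by (rule sets_gaussian_vector_box)
    ultimately have "(\<integral>\<^sup>+ y. indicator ?B (h(i0 := y)) \<partial>?P) \<le> emeasure ?P ?C"
      by (simp add: nn_integral_mono flip: nn_integral_indicator)
    also have "\<dots> \<le> ?bound"
      using assms by (intro emeasure_gaussian_vector_box_le) auto
    finally show "(\<integral>\<^sup>+ y. indicator ?B (h(i0 := y)) \<partial>?P) \<le> ?bound" .
  qed
  also have "\<dots> = ?bound"
    by (simp add: PJ.emeasure_space_1)
  finally show ?thesis .
qed

lemma norm_combination_eq:
  fixes \<mu> :: "'i \<Rightarrow> real^'d"
  shows "norm (\<Sum>i\<in>I. w i *\<^sub>R (\<mu> i + vec_lambda (g i)))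
    = sqrt (\<Sum>j\<in>UNIV. (\<Sum>i\<in>I. w i * (\<mu> i $ j + g i j))\<^sup>2)"
  by (simp add: norm_vec_def L2_set_def)

lemma borel_measurable_norm_combination:
  fixes \<mu> :: "'i \<Rightarrow> real^'d"
  assumes "finite I"
  shows "(\<lambda>g. norm (\<Sum>i\<in>I. w i *\<^sub>R (\<mu> i + vec_lambda (g i))))
    \<in> borel_measurable (PiM I (\<lambda>_. gaussian_vector \<sigma>))"
  unfolding norm_combination_eq using assms by measurable

lemma measure_gaussian_combination_le:
  fixes \<mu> :: "'i \<Rightarrow> real^'d" and w :: "'i \<Rightarrow> real"
  assumes "\<sigma> > 0" "\<delta> \<ge> 0" "finite I" "i0 \<in> I" "w i0 \<noteq> 0"
  defines "M \<equiv> PiM I (\<lambda>_. gaussian_vector \<sigma>)"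
  shows "measure M {g \<in> space M. norm (\<Sum>i\<in>I. w i *\<^sub>R (\<mu> i + vec_lambda (g i))) \<le> \<delta>}
    \<le> (\<delta> / (\<bar>w i0\<bar> * \<sigma>)) ^ CARD('d)"
proof -
  interpret prob_space M
    unfolding M_def by (intro prob_space_PiM prob_space_gaussian_vector assms(1))
  define a where "a j = (\<Sum>i\<in>I. w i * \<mu> i $ j)" for j
  let ?B = "{g \<in> space M. \<forall>j. \<bar>a j + (\<Sum>i\<in>I. w i * g i j)\<bar> \<le> \<delta>}"
  have "{g \<in> space M. norm (\<Sum>i\<in>I. w i *\<^sub>R (\<mu> i + vec_lambda (g i))) \<le> \<delta>} \<subseteq> ?B"
  proof safe
    fix g j assume "norm (\<Sum>i\<in>I. w i *\<^sub>R (\<mu> i + vec_lambda (g i))) \<le> \<delta>"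
    moreover have "\<bar>(\<Sum>i\<in>I. w i *\<^sub>R (\<mu> i + vec_lambda (g i))) $ j\<bar>
        \<le> norm (\<Sum>i\<in>I. w i *\<^sub>R (\<mu> i + vec_lambda (g i)))"
      by (rule component_le_norm_cart)
    ultimately show "\<bar>a j + (\<Sum>i\<in>I. w i * g i j)\<bar> \<le> \<delta>"
      by (simp add: a_def algebra_simps sum.distrib)
  qed
  moreover have "?B \<in> sets M"
    unfolding M_def using assms(3) by measurable
  ultimately have "measure M {g \<in> space M. norm (\<Sum>i\<in>I. w i *\<^sub>R (\<mu> i + vec_lambda (g i))) \<le> \<delta>}
      \<le> measure M ?B"
    by (intro finite_measure_mono)
  also have "\<dots> \<le> (\<delta> / (\<bar>w i0\<bar> * \<sigma>)) ^ CARD('d)"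
    using emeasure_gaussian_combination_box_le[where a=a and w=w, OF assms(1-5)] assms(1,2)
    by (simp add: M_def emeasure_eq_measure[unfolded M_def] ennreal_le_iff)
  finally show ?thesis .
qed

lemma inverse_le_abs_if_mult_Ints:
  fixes x q :: real
  assumes "x * q \<in> \<int>" "q > 0" "x \<noteq> 0"
  shows "1 / q \<le> \<bar>x\<bar>"
proof -
  have "1 \<le> \<bar>x * q\<bar>"
    using assms by (intro Ints_nonzero_abs_ge1) auto
  then show ?thesis
    using assms(2) by (simp add: abs_mult field_simps)
qed

lemma measure_gaussian_combination_le_denom:
  fixes \<mu> :: "'i \<Rightarrow> real^'d" and w :: "'i \<Rightarrow> real"
  assumes "\<sigma> > 0" "\<delta> \<ge> 0" "finite I" "i0 \<in> I" "w i0 \<noteq> 0" "w i0 * q \<in> \<int>" "q > 0"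
  defines "M \<equiv> PiM I (\<lambda>_. gaussian_vector \<sigma>)"
  shows "measure M {g \<in> space M. norm (\<Sum>i\<in>I. w i *\<^sub>R (\<mu> i + vec_lambda (g i))) \<le> \<delta>}
    \<le> (\<delta> / \<sigma>) ^ CARD('d) * q ^ CARD('d)"
proof -
  have "1 / q \<le> \<bar>w i0\<bar>"
    using assms(5-7) by (intro inverse_le_abs_if_mult_Ints)
  then have "1 / \<bar>w i0\<bar> \<le> q"
    using assms(5,7) by (simp add: field_simps)
  then have "\<delta> / \<sigma> * (1 / \<bar>w i0\<bar>) \<le> \<delta> / \<sigma> * q"
    using assms(1,2) by (intro mult_left_mono) auto
  then have "\<delta> / (\<bar>w i0\<bar> * \<sigma>) \<le> \<delta> / \<sigma> * q"
    by (simp add: mult.commute)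
  then have "(\<delta> / (\<bar>w i0\<bar> * \<sigma>)) ^ CARD('d) \<le> (\<delta> / \<sigma>) ^ CARD('d) * q ^ CARD('d)"
    using assms(1,2) by (simp add: power_mono flip: power_mult_distrib)
  with measure_gaussian_combination_le[where w=w and \<mu>=\<mu>, OF assms(1-5)] show ?thesis
    unfolding M_def by linarith
qed

section \<open>Sparseness with respect to rational coefficient vectors\<close>

definition delta_sparse_for :: "real \<Rightarrow> nat \<Rightarrow> (nat \<Rightarrow> real) set \<Rightarrow> (nat \<Rightarrow> 'a::real_normed_vector) \<Rightarrow> bool" where
  "delta_sparse_for \<delta> n C x \<longleftrightarrow>
     (\<forall>c1\<in>C. \<forall>c2\<in>C. \<forall>c3\<in>C. \<forall>c4\<in>C.
        norm (lincomb n x c1 + lincomb n x c2 - lincomb n x c3 - lincomb n x c4) \<le> \<delta>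
        \<longrightarrow> (\<lambda>i. c1 i + c2 i) = (\<lambda>i. c3 i + c4 i))"

lemma delta_sparse_eq_delta_sparse_for:
  "delta_sparse n d k \<delta> x = delta_sparse_for \<delta> n (Collect (is_key_value n d k)) x"
  by (auto simp: delta_sparse_def delta_sparse_for_def)

lemma lincomb_add: "lincomb n x c + lincomb n x c' = lincomb n x (\<lambda>i. c i + c' i)"
  by (simp add: lincomb_def scaleR_add_left sum.distrib)

lemma lincomb_diff: "lincomb n x c - lincomb n x c' = lincomb n x (\<lambda>i. c i - c' i)"
  by (simp add: lincomb_def scaleR_diff_left sum_subtractf)

lemma power4_sum:
  fixes f :: "'a \<Rightarrow> 'b::comm_semiring_1"
  shows "sum f A ^ 4 = (\<Sum>(a, b, c, d)\<in>A \<times> A \<times> A \<times> A. f a * f b * f c * f d)"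
  by (simp add: sum.cartesian_product[symmetric] sum_product power4_eq_xxxx
      sum_distrib_left sum_distrib_right mult_ac)

definition quad_weight :: "('k \<Rightarrow> nat \<Rightarrow> real) \<Rightarrow> 'k \<times> 'k \<times> 'k \<times> 'k \<Rightarrow> nat \<Rightarrow> real" where
  "quad_weight c = (\<lambda>(p1, p2, p3, p4) i. c p1 i + c p2 i - c p3 i - c p4 i)"

lemma not_delta_sparse_for_iff:
  assumes "\<And>p i. p \<in> K \<Longrightarrow> n \<le> i \<Longrightarrow> c p i = 0"
  shows "\<not> delta_sparse_for \<delta> n (c ` K) x \<longleftrightarrow>
    (\<exists>P\<in>K \<times> K \<times> K \<times> K. (\<exists>i<n. quad_weight c P i \<noteq> 0) \<and> norm (\<Sum>i<n. quad_weight c P i *\<^sub>R x i) \<le> \<delta>)"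
proof -
  have combination: "lincomb n x (c p1) + lincomb n x (c p2) - lincomb n x (c p3) - lincomb n x (c p4)
      = (\<Sum>i<n. quad_weight c (p1, p2, p3, p4) i *\<^sub>R x i)" for p1 p2 p3 p4
    unfolding lincomb_add lincomb_diff by (simp add: lincomb_def quad_weight_def)
  have different_sums: "(\<lambda>i. c p1 i + c p2 i) \<noteq> (\<lambda>i. c p3 i + c p4 i)
      \<longleftrightarrow> (\<exists>i<n. quad_weight c (p1, p2, p3, p4) i \<noteq> 0)"
    if "p1 \<in> K" "p2 \<in> K" "p3 \<in> K" "p4 \<in> K" for p1 p2 p3 p4
  proof
    assume "(\<lambda>i. c p1 i + c p2 i) \<noteq> (\<lambda>i. c p3 i + c p4 i)"
    then obtain i where i: "c p1 i + c p2 i \<noteq> c p3 i + c p4 i"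
      by (auto simp: fun_eq_iff)
    then have "i < n"
      using assms that by (cases "i < n") auto
    with i show "\<exists>i<n. quad_weight c (p1, p2, p3, p4) i \<noteq> 0"
      by (auto simp: quad_weight_def)
  qed (force simp: quad_weight_def fun_eq_iff algebra_simps)
  show ?thesis
    unfolding delta_sparse_for_def by (auto simp: combination different_sums; blast)
qed

lemma Ints_diff_sum_mult_prod:
  fixes a1 a2 a3 a4 q1 q2 q3 q4 :: real
  assumes "a1 * q1 \<in> \<int>" "a2 * q2 \<in> \<int>" "a3 * q3 \<in> \<int>" "a4 * q4 \<in> \<int>"
    and "q1 \<in> \<int>" "q2 \<in> \<int>" "q3 \<in> \<int>" "q4 \<in> \<int>"
  shows "(a1 + a2 - a3 - a4) * (q1 * q2 * q3 * q4) \<in> \<int>"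
proof -
  have "(a1 + a2 - a3 - a4) * (q1 * q2 * q3 * q4) = a1 * q1 * (q2 * q3 * q4) + a2 * q2 * (q1 * q3 * q4)
      - a3 * q3 * (q1 * q2 * q4) - a4 * q4 * (q1 * q2 * q3)"
    by (simp add: algebra_simps)
  also have "\<dots> \<in> \<int>"
    using assms by (meson Ints_add Ints_diff Ints_mult)
  finally show ?thesis .
qed

lemma measure_not_delta_sparse_for_le:
  fixes \<mu> :: "nat \<Rightarrow> real^'d" and c :: "'k \<Rightarrow> nat \<Rightarrow> real" and q :: "'k \<Rightarrow> nat"
  assumes "\<sigma> > 0" "\<delta> \<ge> 0" "finite K"
    and support: "\<And>p i. p \<in> K \<Longrightarrow> n \<le> i \<Longrightarrow> c p i = 0"
    and denom: "\<And>p i. p \<in> K \<Longrightarrow> c p i * q p \<in> \<int>" "\<And>p. p \<in> K \<Longrightarrow> q p \<ge> 1"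
  defines "M \<equiv> PiM {..<n} (\<lambda>_. gaussian_vector \<sigma>)"
  defines "E \<equiv> {g \<in> space M. \<not> delta_sparse_for \<delta> n (c ` K) (\<lambda>i. \<mu> i + vec_lambda (g i))}"
  shows "E \<in> sets M \<and> measure M E \<le> (\<delta> / \<sigma>) ^ CARD('d) * (\<Sum>p\<in>K. real (q p) ^ CARD('d)) ^ 4"
proof -
  interpret prob_space M
    unfolding M_def by (intro prob_space_PiM prob_space_gaussian_vector assms(1))
  define Q where "Q = (\<lambda>(p1, p2, p3, p4). real (q p1) * real (q p2) * real (q p3) * real (q p4))"
  define T where "T = {P \<in> K \<times> K \<times> K \<times> K. \<exists>i<n. quad_weight c P i \<noteq> 0}"
  define A where
    "A P = {g \<in> space M. norm (\<Sum>i<n. quad_weight c P i *\<^sub>R (\<mu> i + vec_lambda (g i))) \<le> \<delta>}" for P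
  have "finite T"
    using assms(3) by (simp add: T_def)
  have A_sets: "A P \<in> sets M" for P
    unfolding A_def M_def by (intro borel_measurable_le borel_measurable_norm_combination) auto
  have E_eq: "E = (\<Union>P\<in>T. A P)"
    unfolding E_def A_def T_def by (auto simp: not_delta_sparse_for_iff[OF support]; blast)
  have A_le: "measure M (A P) \<le> (\<delta> / \<sigma>) ^ CARD('d) * Q P ^ CARD('d)" if "P \<in> T" for P
  proof -
    obtain p1 p2 p3 p4 i0 where P: "P = (p1, p2, p3, p4)" "p1 \<in> K" "p2 \<in> K" "p3 \<in> K" "p4 \<in> K"
      and i0: "i0 < n" "quad_weight c P i0 \<noteq> 0"
      using \<open>P \<in> T\<close> by (auto simp: T_def)
    have "quad_weight c P i0 * Q P \<in> \<int>"
      unfolding P quad_weight_def Q_def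
      by (simp add: Ints_diff_sum_mult_prod P denom(1))
    moreover have "Q P > 0"
      using P denom(2) by (simp add: Q_def Suc_le_eq)
    ultimately show ?thesis
      unfolding A_def M_def using assms(1,2) i0
      by (intro measure_gaussian_combination_le_denom) auto
  qed
  have "measure M E \<le> (\<Sum>P\<in>T. measure M (A P))"
    unfolding E_eq using A_sets \<open>finite T\<close> by (intro measure_UNION_le) auto
  also have "\<dots> \<le> (\<Sum>P\<in>T. (\<delta> / \<sigma>) ^ CARD('d) * Q P ^ CARD('d))"
    by (intro sum_mono A_le)
  also have "\<dots> \<le> (\<Sum>P\<in>K \<times> K \<times> K \<times> K. (\<delta> / \<sigma>) ^ CARD('d) * Q P ^ CARD('d))"
    using assms(1-3) by (intro sum_mono2) (auto simp: T_def Q_def)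
  also have "\<dots> = (\<delta> / \<sigma>) ^ CARD('d) * (\<Sum>p\<in>K. real (q p) ^ CARD('d)) ^ 4"
    unfolding power4_sum sum_distrib_left by (simp add: Q_def case_prod_unfold power_mult_distrib)
  finally show ?thesis
    unfolding E_eq using A_sets \<open>finite T\<close> by auto
qed

section \<open>Counting key-values\<close>

lemma power_self_le_fact_squared: "m ^ m \<le> (fact m :: nat) ^ 2"
proof -
  have reversed: "(\<Prod>i\<in>{1..m}. i) = (\<Prod>i\<in>{1..m}. m + 1 - i)"
    by (rule prod.atLeastAtMost_rev)
  have "(fact m :: nat) ^ 2 = (\<Prod>i\<in>{1..m}. i) * (\<Prod>i\<in>{1..m}. m + 1 - i)"
    unfolding power2_eq_square fact_prod by (subst (2) reversed) simp
  also have "\<dots> = (\<Prod>i\<in>{1..m}. i * (m + 1 - i))"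
    by (simp add: prod.distrib)
  also have "\<dots> \<ge> (\<Prod>i\<in>{1..m}. m)"
  proof (rule prod_mono)
    fix i assume "i \<in> {1..m}"
    then obtain a b where "i = Suc a" "m = i + b"
      by (metis atLeastAtMost_iff le_iff_add not0_implies_Suc not_one_le_zero)
    then show "0 \<le> m \<and> m \<le> i * (m + 1 - i)"
      by simp
  qed
  finally show ?thesis
    by simp
qed

lemma power_le_fact:
  assumes "2 * d + 2 \<le> m"
  shows "m ^ (d + 1) \<le> (fact m :: nat)"
proof -
  have "(m ^ (d + 1)) ^ 2 = m ^ ((d + 1) * 2)"
    by (rule power_mult[symmetric])
  also have "\<dots> \<le> m ^ m"
    using assms by (intro power_increasing) auto
  also have "\<dots> \<le> (fact m) ^ 2"
    by (rule power_self_le_fact_squared)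
  finally show ?thesis
    by (rule power2_le_imp_le) simp
qed

lemma fact_le_fact_mult_power:
  assumes "j \<le> m"
  shows "(fact m :: nat) \<le> fact j * m ^ (m - j)"
  using assms
proof (induction m rule: dec_induct)
  case (step k)
  have "(fact (Suc k) :: nat) = Suc k * fact k"
    by simp
  also have "\<dots> \<le> Suc k * (fact j * k ^ (k - j))"
    using step.IH by (rule mult_le_mono2)
  also have "\<dots> \<le> Suc k * (fact j * Suc k ^ (k - j))"
    by (intro mult_le_mono2 power_mono) auto
  also have "\<dots> = fact j * Suc k ^ (Suc k - j)"
    using step.hyps by (simp add: Suc_diff_le algebra_simps)
  finally show ?case .
qed simp

lemma choose_mult_fact_le_power:
  assumes "j \<le> m" "m \<le> n"
  shows "(n choose j) * fact m \<le> (n ^ m :: nat)"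
proof -
  have "(n choose j) * fact m \<le> ((n choose j) * fact j) * m ^ (m - j)"
    using fact_le_fact_mult_power[OF assms(1)] by (simp add: mult.assoc)
  also have "\<dots> \<le> n ^ j * n ^ (m - j)"
    using assms(2) by (intro mult_le_mono binomial_fact_pow power_mono) auto
  also have "\<dots> = n ^ m"
    using assms(1) by (simp flip: power_add)
  finally show ?thesis .
qed

lemma two_power_le_power:
  assumes "2 \<le> n" "n \<le> m" "4 * d \<le> m"
  shows "(2::nat) ^ n \<le> n ^ (m - d)"
proof (cases "n = 2")
  case True
  have "(2::nat) ^ 2 \<le> 2 ^ (m - d)"
    using assms by (intro power_increasing) auto
  with True show ?thesis
    by simp
next
  case False
  then have "3 \<le> n"
    using assms(1) by simp
  have "((2::nat) ^ n) ^ 4 = 16 ^ n"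
    by (simp flip: power_mult add: mult.commute[of n] power_mult)
  also have "\<dots> \<le> (3 ^ 3) ^ n"
    by (intro power_mono) auto
  also have "\<dots> \<le> (n ^ 3) ^ n"
    using \<open>3 \<le> n\<close> by (intro power_mono) auto
  also have "\<dots> \<le> n ^ (4 * (m - d))"
    using assms \<open>3 \<le> n\<close> by (simp flip: power_mult add: power_increasing)
  also have "\<dots> = (n ^ (m - d)) ^ 4"
    by (simp flip: power_mult add: mult.commute)
  finally show ?thesis
    by (simp add: power_mono_iff)
qed

definition small_subsets :: "nat \<Rightarrow> nat \<Rightarrow> nat set set" where
  "small_subsets n m = {S. S \<subseteq> {..<n} \<and> S \<noteq> {} \<and> card S \<le> m}"

lemma finite_small_subsets: "finite (small_subsets n m)"
  by (rule finite_subset[of _ "Pow {..<n}"]) (auto simp: small_subsets_def)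

lemma card_small_subsets_le_power: "card (small_subsets n m) \<le> 2 ^ n - 1"
proof -
  have "card (small_subsets n m) \<le> card (Pow {..<n} - {{}})"
    by (intro card_mono) (auto simp: small_subsets_def)
  then show ?thesis
    by (simp add: card_Pow)
qed

lemma card_small_subsets_le_sum_choose: "card (small_subsets n m) \<le> (\<Sum>j=1..m. n choose j)"
proof -
  have "small_subsets n m \<subseteq> (\<Union>j\<in>{1..m}. {S. S \<subseteq> {..<n} \<and> card S = j})"
    by (auto simp: small_subsets_def Suc_le_eq card_gt_0_iff dest: finite_subset)
  then have "card (small_subsets n m) \<le> card (\<Union>j\<in>{1..m}. {S. S \<subseteq> {..<n} \<and> card S = j})"
    by (intro card_mono) auto
  also have "\<dots> \<le> (\<Sum>j=1..m. card {S. S \<subseteq> {..<n} \<and> card S = j})"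
    by (rule card_UN_le) simp
  finally show ?thesis
    by (simp add: n_subsets)
qed

lemma sum_card_power_small_subsets_le:
  assumes "1 \<le> d" "4 * d \<le> m"
  shows "(\<Sum>S\<in>small_subsets n m. card S ^ d) \<le> n ^ m"
  \<comment> \<open>If \<open>n \<le> m\<close>: at most \<open>2\<^sup>n - 1\<close> sets of size at most \<open>n\<close>. Otherwise count by size,
    using \<open>(n choose j) m! \<le> n\<^sup>m\<close> and \<open>m\<^sup>d\<^sup>+\<^sup>1 \<le> m!\<close>.\<close>
proof (cases "n \<le> m")
  case True
  have "(\<Sum>S\<in>small_subsets n m. card S ^ d) \<le> card (small_subsets n m) * n ^ d"
    using sum_bounded_above[of "small_subsets n m" "\<lambda>S. card S ^ d" "n ^ d"]
    by (force simp: small_subsets_def intro: power_mono card_mono[of "{..<n}", simplified])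
  also have "\<dots> \<le> (2 ^ n - 1) * n ^ d"
    by (intro mult_right_mono card_small_subsets_le_power) simp
  also have "\<dots> \<le> n ^ (m - d) * n ^ d"
  proof (cases "2 \<le> n")
    case True
    then show ?thesis
      using two_power_le_power[OF True \<open>n \<le> m\<close> assms(2)] by (simp add: mult_right_mono)
  next
    case False
    then have "n = 0 \<or> n = 1"
      by auto
    then show ?thesis
      using assms by auto
  qed
  also have "\<dots> = n ^ m"
    using assms by (simp flip: power_add)
  finally show ?thesis .
next
  case False
  have "card (small_subsets n m) * fact m \<le> (\<Sum>j=1..m. (n choose j) * fact m)"
    using card_small_subsets_le_sum_choose by (simp flip: sum_distrib_right)
  also have "\<dots> \<le> (\<Sum>j=1..m. n ^ m)"
    using False by (intro sum_mono choose_mult_fact_le_power) auto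
  finally have "card (small_subsets n m) * fact m \<le> m * n ^ m"
    by simp
  moreover have "m * m ^ d \<le> fact m"
    using power_le_fact[of d m] assms by simp
  ultimately have "m * (card (small_subsets n m) * m ^ d) \<le> m * n ^ m"
    by (metis mult.left_commute mult_le_mono2 order_trans)
  then have "card (small_subsets n m) * m ^ d \<le> n ^ m"
    using assms by simp
  moreover have "(\<Sum>S\<in>small_subsets n m. card S ^ d) \<le> card (small_subsets n m) * m ^ d"
    using sum_bounded_above[of "small_subsets n m" "\<lambda>S. card S ^ d" "m ^ d"]
    by (force simp: small_subsets_def intro: power_mono)
  ultimately show ?thesis
    by linarith
qed

definition key_params :: "nat \<Rightarrow> nat \<Rightarrow> (nat \<times> nat \<times> nat set) set" where
  "key_params n m = {1..n^2} \<times> {1..<n} \<times> small_subsets n m"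

lemma finite_key_params: "finite (key_params n m)"
  by (simp add: key_params_def finite_small_subsets)

definition key_vector :: "nat \<times> nat \<times> nat set \<Rightarrow> nat \<Rightarrow> real" where
  "key_vector = (\<lambda>(s, t, S). key_coeffs s t S)"

definition key_denom :: "nat \<times> nat \<times> nat set \<Rightarrow> nat" where
  "key_denom = (\<lambda>(s, t, S). t * card S)"

lemma is_key_value_eq_image:
  assumes "m = nat \<lfloor>4 * real d * sqrt (real k)\<rfloor>"
  shows "Collect (is_key_value n d k) = key_vector ` key_params n m"
proof -
  have card_le: "real (card S) \<le> 4 * real d * sqrt (real k) \<longleftrightarrow> card S \<le> m" for S
    using assms by (simp add: le_nat_iff le_floor_iff)
  show ?thesis
  proof (intro set_eqI iffI)
    fix c assume "c \<in> Collect (is_key_value n d k)"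
    then obtain s t S where "(s, t, S) \<in> key_params n m" "c = key_coeffs s t S"
      unfolding is_key_value_def card_le key_params_def small_subsets_def by auto
    then show "c \<in> key_vector ` key_params n m"
      by (force simp: key_vector_def)
  next
    fix c assume "c \<in> key_vector ` key_params n m"
    then obtain s t S where "(s, t, S) \<in> key_params n m" "c = key_coeffs s t S"
      by (auto simp: key_vector_def)
    then show "c \<in> Collect (is_key_value n d k)"
      unfolding is_key_value_def card_le key_params_def small_subsets_def by auto
  qed
qed

lemma key_vector_eq_0: "p \<in> key_params n m \<Longrightarrow> n \<le> i \<Longrightarrow> key_vector p i = 0"
  by (cases p) (auto simp: key_vector_def key_coeffs_def key_params_def small_subsets_def)

lemma key_vector_mult_key_denom_Ints: "key_vector p i * key_denom p \<in> \<int>"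
  by (cases p, cases "i \<in> snd (snd p) \<and> key_denom p \<noteq> 0")
    (auto simp: key_vector_def key_denom_def key_coeffs_def)

lemma key_denom_ge_1: "p \<in> key_params n m \<Longrightarrow> 1 \<le> key_denom p"
  by (auto simp: key_denom_def key_params_def small_subsets_def Suc_le_eq card_gt_0_iff
      dest: finite_subset)

lemma sum_key_denom_power_le:
  assumes "1 \<le> d" "4 * d \<le> m"
  shows "(\<Sum>p\<in>key_params n m. key_denom p ^ d) \<le> n ^ (m + d + 3)"
proof -
  have "(\<Sum>p\<in>key_params n m. key_denom p ^ d)
      = n ^ 2 * ((\<Sum>t=1..<n. t ^ d) * (\<Sum>S\<in>small_subsets n m. card S ^ d))"
    by (simp add: key_params_def key_denom_def sum.cartesian_product' sum_product
        power_mult_distrib)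
  also have "\<dots> \<le> n ^ 2 * (n * n ^ d * n ^ m)"
  proof -
    have "(\<Sum>t=1..<n. t ^ d) \<le> (\<Sum>t=1..<n. n ^ d)"
      by (intro sum_mono power_mono) auto
    also have "\<dots> \<le> n * n ^ d"
      by simp
    finally show ?thesis
      by (intro mult_le_mono sum_card_power_small_subsets_le assms order_refl)
  qed
  also have "\<dots> = n ^ (m + d + 3)"
    by (simp add: power_add power2_eq_square power3_eq_cube mult_ac)
  finally show ?thesis .
qed

lemma measure_not_delta_sparse_le:
  fixes n :: nat and \<mu> :: "nat \<Rightarrow> real^'d"
  assumes "\<sigma> > 0" "\<delta> \<ge> 0" "m = nat \<lfloor>4 * real CARD('d) * sqrt (real k)\<rfloor>"
  defines "M \<equiv> PiM {..<n} (\<lambda>_. gaussian_vector \<sigma>)"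
  defines "E \<equiv> {g \<in> space M. \<not> delta_sparse n CARD('d) k \<delta> (\<lambda>i. \<mu> i + vec_lambda (g i))}"
  shows "E \<in> sets M \<and>
    measure M E \<le> (\<delta> / \<sigma>) ^ CARD('d) * (\<Sum>p\<in>key_params n m. real (key_denom p) ^ CARD('d)) ^ 4"
  unfolding E_def M_def delta_sparse_eq_delta_sparse_for is_key_value_eq_image[OF assms(3)]
  using assms(1,2)
  by (intro measure_not_delta_sparse_for_le finite_key_params key_vector_eq_0
      key_vector_mult_key_denom_Ints key_denom_ge_1) auto

lemma power_mult_power4_le_powr:
  fixes x y :: real
  assumes "1 \<le> n" "real m \<le> 4 * x" "0 \<le> y"
  shows "y ^ d * (real n ^ (m + d + 3)) ^ 4 \<le> real n powr (16 * x + 12) * (real n ^ 4 * y) ^ d"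
proof -
  have "(m + d + 3) * 4 = (4 * m + 12) + 4 * d"
    by simp
  then have "(real n ^ (m + d + 3)) ^ 4 = real n ^ (4 * m + 12) * (real n ^ 4) ^ d"
    by (metis power_add power_mult)
  then have "y ^ d * (real n ^ (m + d + 3)) ^ 4 = real n ^ (4 * m + 12) * (real n ^ 4 * y) ^ d"
    by (simp add: power_mult_distrib)
  also have "\<dots> = real n powr real (4 * m + 12) * (real n ^ 4 * y) ^ d"
    using assms(1) by (subst powr_realpow) auto
  also have "\<dots> \<le> real n powr (16 * x + 12) * (real n ^ 4 * y) ^ d"
    using assms by (intro mult_right_mono powr_mono) auto
  finally show ?thesis .
qed

theorem lemma11:
  fixes n k :: nat and \<sigma> \<delta> :: real and \<mu> :: "nat \<Rightarrow> real ^ 'd"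
  assumes "1 \<le> k" and "k \<le> n" and "CARD('d) \<le> n" and "\<sigma> > 0" and "\<delta> > 0"
    and "\<forall>i<n. \<forall>j. 0 \<le> \<mu> i $ j \<and> \<mu> i $ j \<le> 1"
  defines "M \<equiv> PiM {..<n} (\<lambda>_. PiM (UNIV :: 'd set) (\<lambda>_. density lborel (normal_density 0 \<sigma>)))"
  defines "E \<equiv> {g \<in> space M. \<not> delta_sparse n CARD('d) k \<delta> (\<lambda>i. \<mu> i + vec_lambda (g i))}"
  shows "E \<in> sets M \<and>
    measure M E \<le> real n powr (16 * real CARD('d) * sqrt (real k) + 12)
                    * (real n ^ 4 * \<delta> / \<sigma>) ^ CARD('d)"
proof -
  define d where "d = CARD('d)"
  define m where "m = nat \<lfloor>4 * real d * sqrt (real k)\<rfloor>"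
  have "1 \<le> d" "1 \<le> sqrt (real k)"
    using assms(1) by (simp_all add: d_def Suc_le_eq)
  then have "4 * d \<le> m" "real m \<le> 4 * real d * sqrt (real k)"
    by (auto simp: m_def le_nat_iff le_floor_iff)
  have E: "E \<in> sets M \<and>
      measure M E \<le> (\<delta> / \<sigma>) ^ d * (\<Sum>p\<in>key_params n m. real (key_denom p) ^ d) ^ 4"
    unfolding M_def E_def d_def using assms(4,5) m_def[unfolded d_def]
    by (intro measure_not_delta_sparse_le) auto
  have "(\<Sum>p\<in>key_params n m. real (key_denom p) ^ d) \<le> real n ^ (m + d + 3)"
    using sum_key_denom_power_le[OF \<open>1 \<le> d\<close> \<open>4 * d \<le> m\<close>, of n]
    unfolding of_nat_power[symmetric] of_nat_sum[symmetric] of_nat_le_iff .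
  then have "measure M E \<le> (\<delta> / \<sigma>) ^ d * (real n ^ (m + d + 3)) ^ 4"
    using E assms(4,5) by (elim conjE order_trans) (intro mult_left_mono power_mono sum_nonneg; simp)
  also have "\<dots> \<le> real n powr (16 * (real d * sqrt (real k)) + 12) * (real n ^ 4 * (\<delta> / \<sigma>)) ^ d"
    using assms(1,2,4,5) \<open>real m \<le> _\<close> by (intro power_mult_power4_le_powr) (auto simp: mult.assoc)
  finally show ?thesis
    using E unfolding d_def by (simp add: mult.assoc)
qed

end
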